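(* For every $\bm r\in\mathbb{Z}^N\setminus\{\bm0\}$, the space of derivations of $\mathcal{H}_N'$ of degree $\bm r$ equals $\operatorname{ad}(\mathbb{K}h_{\bm r})$; that is, every derivation $\partial$ of $\mathcal{H}_N'$ with $\partial(\mathbb{K}h_{\bm s})\subseteq\mathbb{K}h_{\bm s+\bm r}$ for all $\bm s\in\mathbb{Z}^N$ is of the form $\operatorname{ad}(c\,h_{\bm r})$ for some $c\in\mathbb{K}$.
   Context: $\mathbb{K}$ is an algebraically closed field of characteristic zero, $N=2m\ge2$ even, $(\cdot,\cdot)$ the bilinear form on $\mathbb{K}^N$ with $(e_i,e_j)=\delta_{ij}$. Let $A_N=\mathbb{K}[t_1^{\pm1},\dots,t_N^{\pm1}]$, $d_i=t_i\frac{\partial}{\partial t_i}$, $t^{\bm r}=t_1^{r_1}\cdots t_N^{r_N}$, $D(u,\bm r)=\sum_i u_it^{\bm r}d_i$. Let $\bm J=\begin{pmatrix} O_m & I_m\\ -I_m & O_m\end{pmatrix}$, $\overline{\bm r}=\bm J\bm r$, $h_{\bm r}=D(\overline{\bm r},\bm r)$ (so $h_{\bm0}=0$). $\mathcal{H}_N'=\operatorname{span}_{\mathbb{K}}\{h_{\bm r}:\bm r\in\mathbb{Z}^N\setminus\{\bm0\}\}$ is the Lie algebra with bracket $[h_{\bm r},h_{\bm s}]=(\overline{\bm r},\bm s)h_{\bm r+\bm s}$, $\mathbb{Z}^N$-graded with degree-$\bm s$ component $\mathbb{K}h_{\bm s}$. *)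

theory Defs
  imports "HOL-Computational_Algebra.Polynomial"
begin

(* Lattice Z^N, N = 2m, modelled as functions nat => int vanishing from index N on. *)
definition Zvec :: "nat \<Rightarrow> (nat \<Rightarrow> int) set" where
  "Zvec N = {r. \<forall>i\<ge>N. r i = 0}"

definition vzero :: "nat \<Rightarrow> int" where "vzero = (\<lambda>_. 0)"

definition vadd :: "(nat \<Rightarrow> int) \<Rightarrow> (nat \<Rightarrow> int) \<Rightarrow> (nat \<Rightarrow> int)" where
  "vadd r s = (\<lambda>i. r i + s i)"

(* J r = rbar with J = [[0, I_m], [-I_m, 0]]:  (J r)_i = r_(i+m) for i<m, -r_(i-m) for m<=i<2m *)
definition Jmat :: "nat \<Rightarrow> (nat \<Rightarrow> int) \<Rightarrow> (nat \<Rightarrow> int)" where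
  "Jmat m r = (\<lambda>i. if i < m then r (i + m) else if i < 2*m then - r (i - m) else 0)"

definition form :: "nat \<Rightarrow> (nat \<Rightarrow> int) \<Rightarrow> (nat \<Rightarrow> int) \<Rightarrow> int" where
  "form N r s = (\<Sum>i<N. r i * s i)"

(* elements of H_N' : finitely supported K-valued functions on Z^N \ {0}
   (coefficient of x at r is the coefficient of h_r) *)
definition Hcar :: "nat \<Rightarrow> ((nat \<Rightarrow> int) \<Rightarrow> 'k::field) set" where
  "Hcar m = {x. finite {r. x r \<noteq> 0} \<and> (\<forall>r. x r \<noteq> 0 \<longrightarrow> r \<in> Zvec (2*m) \<and> r \<noteq> vzero)}"

definition supp :: "((nat \<Rightarrow> int) \<Rightarrow> 'k::field) \<Rightarrow> (nat \<Rightarrow> int) set" where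
  "supp x = {r. x r \<noteq> 0}"

(* basis element h_s (h_0 = 0) *)
definition hb :: "(nat \<Rightarrow> int) \<Rightarrow> ((nat \<Rightarrow> int) \<Rightarrow> 'k::field)" where
  "hb s = (\<lambda>t. if t = s \<and> s \<noteq> vzero then 1 else 0)"

definition smul :: "'k::field \<Rightarrow> ((nat \<Rightarrow> int) \<Rightarrow> 'k) \<Rightarrow> ((nat \<Rightarrow> int) \<Rightarrow> 'k)" where
  "smul c x = (\<lambda>t. c * x t)"

definition hadd :: "((nat \<Rightarrow> int) \<Rightarrow> 'k::field) \<Rightarrow> ((nat \<Rightarrow> int) \<Rightarrow> 'k) \<Rightarrow> ((nat \<Rightarrow> int) \<Rightarrow> 'k)" where
  "hadd x y = (\<lambda>t. x t + y t)"

(* bracket [h_r, h_s] = (rbar, s) h_(r+s), extended bilinearly *)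
definition hbr :: "nat \<Rightarrow> ((nat \<Rightarrow> int) \<Rightarrow> 'k::field) \<Rightarrow> ((nat \<Rightarrow> int) \<Rightarrow> 'k) \<Rightarrow> ((nat \<Rightarrow> int) \<Rightarrow> 'k)" where
  "hbr m x y = (\<lambda>t. if t = vzero then 0 else
      (\<Sum>r\<in>supp x. \<Sum>s\<in>supp y.
          if vadd r s = t then x r * y s * of_int (form (2*m) (Jmat m r) s) else 0))"

definition is_derivation :: "nat \<Rightarrow> (((nat \<Rightarrow> int) \<Rightarrow> 'k::field) \<Rightarrow> ((nat \<Rightarrow> int) \<Rightarrow> 'k)) \<Rightarrow> bool" where
  "is_derivation m D \<longleftrightarrow>
     (\<forall>x\<in>Hcar m. D x \<in> Hcar m) \<and>
     (\<forall>x\<in>Hcar m. \<forall>y\<in>Hcar m. D (hadd x y) = hadd (D x) (D y)) \<and>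
     (\<forall>c. \<forall>x\<in>Hcar m. D (smul c x) = smul c (D x)) \<and>
     (\<forall>x\<in>Hcar m. \<forall>y\<in>Hcar m. D (hbr m x y) = hadd (hbr m (D x) y) (hbr m x (D y)))"

definition alg_closed :: "'k::field itself \<Rightarrow> bool" where
  "alg_closed _ \<longleftrightarrow> (\<forall>p :: 'k poly. degree p > 0 \<longrightarrow> (\<exists>z. poly p z = 0))"

end

theory Submission
  imports Defs
begin

(* A derivation D of degree r is determined by coefficients c with D h_s = c_s h_(s+r), and the
   Leibniz rule on [h_s, h_t] says  (s_bar, t) c_(s+t) = c_s (s_bar + r_bar, t) + c_t (s_bar, t + r).
   Writing a(s) = (r_bar, s), one tests this equation on the pairs (r_bar, -r_bar), (-r_bar, r)
   and (r_bar, r - r_bar) (note a(r_bar) = |r|^2 > 0) to get c_r = 0. Then c is r-periodic,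
   additive and proportional to a off the hyperplane a = 0, so c_s = l a(s) there; on the
   hyperplane, pairing s with some t off both hyperplanes a = 0 and (s_bar + r_bar, -) = 0 forces
   c_s = 0. Hence D and ad(l h_r) agree on the basis, and so everywhere by linearity. *)

definition vneg :: "(nat \<Rightarrow> int) \<Rightarrow> (nat \<Rightarrow> int)" where
  "vneg x = (\<lambda>i. - x i)"

lemma vadd_commute: "vadd x y = vadd y x"
  by (auto simp: vadd_def)

lemma vadd_assoc: "vadd (vadd x y) z = vadd x (vadd y z)"
  by (auto simp: vadd_def)

lemma vadd_vzero [simp]: "vadd vzero x = x" "vadd x vzero = x"
  by (auto simp: vadd_def vzero_def)

lemma vadd_vneg_right: "vadd x (vneg x) = vzero"
  by (auto simp: vadd_def vneg_def vzero_def)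

lemma vadd_self_eq_vzero_iff: "vadd x x = vzero \<longleftrightarrow> x = vzero"
  by (auto simp: vadd_def vzero_def fun_eq_iff)

lemma vadd_in_Zvec: "x \<in> Zvec N \<Longrightarrow> y \<in> Zvec N \<Longrightarrow> vadd x y \<in> Zvec N"
  by (simp add: Zvec_def vadd_def)

lemma vneg_in_Zvec: "x \<in> Zvec N \<Longrightarrow> vneg x \<in> Zvec N"
  by (simp add: Zvec_def vneg_def)

lemma Jmat_in_Zvec: "Jmat m x \<in> Zvec (2*m)"
  by (simp add: Zvec_def Jmat_def)

lemma Zvec_eq_vzero_iff: "x \<in> Zvec N \<Longrightarrow> x = vzero \<longleftrightarrow> (\<forall>i<N. x i = 0)"
  by (auto simp: Zvec_def vzero_def fun_eq_iff) (metis not_le)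

definition symp :: "nat \<Rightarrow> (nat \<Rightarrow> int) \<Rightarrow> (nat \<Rightarrow> int) \<Rightarrow> 'a::comm_ring_1" where
  "symp m x y = of_int (form (2*m) (Jmat m x) y)"

lemma symp_eq_sum: "symp m x y = of_int (\<Sum>j<m. x (j+m) * y j - x j * y (j+m))"
proof -
  have split: "{..<2*m} = {..<m} \<union> (\<lambda>j. j+m) ` {..<m}"
  proof (rule set_eqI, rule iffI)
    fix i assume "i \<in> {..<2*m}"
    then show "i \<in> {..<m} \<union> (\<lambda>j. j+m) ` {..<m}"
      by (cases "i < m") (auto intro!: image_eqI[of i _ "i - m"])
  qed auto
  have "form (2*m) (Jmat m x) y =
      (\<Sum>i<m. Jmat m x i * y i) + (\<Sum>i\<in>(\<lambda>j. j+m) ` {..<m}. Jmat m x i * y i)"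
    unfolding form_def split by (rule sum.union_disjoint) auto
  also have "\<dots> = (\<Sum>j<m. x (j+m) * y j) + (\<Sum>j<m. - x j * y (j+m))"
    by (subst sum.reindex) (auto simp: inj_on_def Jmat_def)
  finally show ?thesis
    by (simp add: symp_def sum_subtractf sum_negf)
qed

lemma symp_vadd_left: "symp m (vadd x y) z = symp m x z + symp m y z"
  by (simp add: symp_eq_sum vadd_def sum.distrib[symmetric] algebra_simps)

lemma symp_vadd_right: "symp m z (vadd x y) = symp m z x + symp m z y"
  by (simp add: symp_eq_sum vadd_def sum.distrib[symmetric] algebra_simps)

lemma symp_vneg_right: "symp m z (vneg x) = - symp m z x"
  by (simp add: symp_eq_sum vneg_def sum_negf[symmetric] algebra_simps)

lemma symp_antisym: "symp m x y = - symp m y x"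
  by (simp add: symp_eq_sum sum_negf[symmetric] algebra_simps)

lemma symp_self [simp]: "symp m x x = 0"
  unfolding symp_eq_sum by (simp add: mult.commute)

lemma symp_vzero_left [simp]: "symp m vzero x = 0"
  by (simp add: symp_eq_sum vzero_def)

lemma symp_vzero_right [simp]: "symp m x vzero = 0"
  by (simp add: symp_eq_sum vzero_def)

lemma symp_Jmat_self_pos:
  assumes "x \<in> Zvec (2*m)" "x \<noteq> vzero"
  shows "(0::int) < symp m x (Jmat m x)"
proof -
  obtain i where i: "i < 2*m" "x i \<noteq> 0"
    using assms Zvec_eq_vzero_iff by blast
  define j where "j = (if i < m then i else i - m)"
  have j: "j < m" "x (j+m) * x (j+m) + x j * x j > 0"
    using i by (auto simp: j_def sum_squares_gt_zero_iff)
  have "x (j+m) * x (j+m) + x j * x j \<le> (\<Sum>k<m. x (k+m) * x (k+m) + x k * x k)"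
    by (rule member_le_sum) (use j in auto)
  also have "\<dots> = symp m x (Jmat m x)"
    by (simp add: symp_eq_sum Jmat_def)
  finally show ?thesis using j by linarith
qed

lemma symp_Jmat_self_nonzero:
  "x \<in> Zvec (2*m) \<Longrightarrow> x \<noteq> vzero \<Longrightarrow> symp m x (Jmat m x) \<noteq> (0::'a::{comm_ring_1,ring_char_0})"
  using symp_Jmat_self_pos[of x m] by (simp add: symp_def)

lemma exists_symp_both_nonzero:
  assumes "u \<in> Zvec (2*m)" "u \<noteq> vzero" "v \<in> Zvec (2*m)" "v \<noteq> vzero"
  obtains t where "t \<in> Zvec (2*m)" "symp m u t \<noteq> (0::'a::{comm_ring_1,ring_char_0})"
    "symp m v t \<noteq> (0::'a)"
proof -
  have u: "symp m u (Jmat m u) \<noteq> (0::'a)" and v: "symp m v (Jmat m v) \<noteq> (0::'a)"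
    using assms symp_Jmat_self_nonzero by blast+
  consider "symp m v (Jmat m u) \<noteq> (0::'a)" | "symp m u (Jmat m v) \<noteq> (0::'a)"
    | "symp m v (Jmat m u) = (0::'a)" "symp m u (Jmat m v) = (0::'a)"
    by blast
  then show thesis
  proof cases
    case 1
    then show thesis using that Jmat_in_Zvec u by blast
  next
    case 2
    then show thesis using that Jmat_in_Zvec v by blast
  next
    case 3
    then show thesis
      using that[of "vadd (Jmat m u) (Jmat m v)"] u v
      by (simp add: vadd_in_Zvec Jmat_in_Zvec symp_vadd_right)
  qed
qed

(* The coefficient c_s with s + r = 0 is arbitrary, since h_0 = 0. *)
locale derivation_coeffs =
  fixes m :: nat and r :: "nat \<Rightarrow> int" and c :: "(nat \<Rightarrow> int) \<Rightarrow> 'k::field_char_0"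
  assumes r_in_Zvec: "r \<in> Zvec (2*m)" and r_nonzero: "r \<noteq> vzero"
    and leibniz: "\<And>s t. s \<in> Zvec (2*m) \<Longrightarrow> t \<in> Zvec (2*m) \<Longrightarrow> vadd (vadd s t) r \<noteq> vzero \<Longrightarrow>
      symp m s t * c (vadd s t) = c s * symp m (vadd s r) t + c t * symp m s (vadd t r)"
begin

abbreviation rbar :: "nat \<Rightarrow> int" where
  "rbar \<equiv> Jmat m r"

lemma symp_r_rbar_nonzero: "symp m r rbar \<noteq> (0::'k)"
  using symp_Jmat_self_nonzero[OF r_in_Zvec r_nonzero] .

lemma symp_r_vadd_r [simp]: "symp m r (vadd v r) = symp m r v"
  by (simp add: symp_vadd_right)

lemma leibniz_expanded:
  assumes "s \<in> Zvec (2*m)" "t \<in> Zvec (2*m)" "vadd (vadd s t) r \<noteq> vzero"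
  shows "symp m s t * c (vadd s t) =
    c s * (symp m s t + symp m r t) + c t * (symp m s t - symp m r s)"
  using leibniz[OF assms] by (simp add: symp_vadd_left symp_vadd_right symp_antisym[of m s r])

lemma leibniz_off_kernel:
  assumes "s \<in> Zvec (2*m)" "t \<in> Zvec (2*m)" "symp m r (vadd s t) \<noteq> (0::'k)"
  shows "symp m s t * c (vadd s t) =
    c s * (symp m s t + symp m r t) + c t * (symp m s t - symp m r s)"
proof -
  have "vadd (vadd s t) r \<noteq> vzero"
    using assms(3) symp_r_vadd_r[of "vadd s t"] by (metis symp_vzero_right)
  then show ?thesis
    using assms by (intro leibniz_expanded)
qed

lemma coeff_r: "c r = 0"
proof -
  define a :: 'k where "a = symp m r rbar"
  have a: "a \<noteq> 0"
    using symp_r_rbar_nonzero by (simp add: a_def)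
  have rbar: "rbar \<in> Zvec (2*m)" "vneg rbar \<in> Zvec (2*m)" "vadd (vneg rbar) r \<in> Zvec (2*m)"
    by (simp_all add: Jmat_in_Zvec vneg_in_Zvec vadd_in_Zvec r_in_Zvec)
  have "symp m rbar (vneg rbar) * c (vadd rbar (vneg rbar)) =
      c rbar * (symp m rbar (vneg rbar) + symp m r (vneg rbar)) +
      c (vneg rbar) * (symp m rbar (vneg rbar) - symp m r rbar)"
    using rbar r_nonzero by (intro leibniz_expanded) (simp_all add: vadd_vneg_right)
  then have "c (vneg rbar) * a = - c rbar * a"
    by (simp add: symp_vneg_right a_def algebra_simps)
  then have neg: "c (vneg rbar) = - c rbar"
    by (metis a minus_mult_left mult_right_cancel)
  have "symp m (vneg rbar) r * c (vadd (vneg rbar) r) =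
      c (vneg rbar) * (symp m (vneg rbar) r + symp m r r) +
      c r * (symp m (vneg rbar) r - symp m r (vneg rbar))"
    using rbar a by (intro leibniz_off_kernel)
      (simp_all add: r_in_Zvec symp_vadd_right symp_vneg_right a_def)
  then have "c (vadd (vneg rbar) r) * a = (c (vneg rbar) + 2 * c r) * a"
    by (simp add: symp_antisym[of m "vneg rbar" r] symp_vneg_right a_def algebra_simps)
  then have shift: "c (vadd (vneg rbar) r) = c (vneg rbar) + 2 * c r"
    by (metis a mult_right_cancel)
  have sum_r: "vadd rbar (vadd (vneg rbar) r) = r"
    by (simp add: vadd_assoc[symmetric] vadd_vneg_right)
  have "symp m rbar (vadd (vneg rbar) r) * c (vadd rbar (vadd (vneg rbar) r)) =
      c rbar * (symp m rbar (vadd (vneg rbar) r) + symp m r (vadd (vneg rbar) r)) +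
      c (vadd (vneg rbar) r) * (symp m rbar (vadd (vneg rbar) r) - symp m r rbar)"
    using rbar r_nonzero
    by (intro leibniz_expanded) (simp_all add: sum_r vadd_self_eq_vzero_iff)
  then have "a * c r = a * (2 * c rbar + 2 * c (vadd (vneg rbar) r))"
    by (simp add: sum_r symp_vadd_right symp_vneg_right symp_antisym[of m rbar r] a_def
        algebra_simps)
  then have "c r = 4 * c r"
    using a by (simp add: shift neg)
  then show ?thesis
    by simp
qed

lemma coeff_shift:
  assumes "s \<in> Zvec (2*m)" "symp m r s \<noteq> (0::'k)"
  shows "c (vadd s r) = c s"
proof -
  have "symp m s r * c (vadd s r) = c s * (symp m s r + symp m r r) + c r * (symp m s r - symp m r s)"
    using assms by (intro leibniz_off_kernel) (simp_all add: r_in_Zvec)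
  then show ?thesis
    using assms(2) by (simp add: coeff_r symp_antisym[of m s r])
qed

lemma coeff_add:
  assumes s: "s \<in> Zvec (2*m)" "symp m r s \<noteq> (0::'k)"
    and t: "t \<in> Zvec (2*m)" "symp m r t \<noteq> (0::'k)"
    and st: "symp m r (vadd s t) \<noteq> (0::'k)"
  shows "c (vadd s t) = c s + c t"
proof -
  have "symp m s t * c (vadd s t) = c s * (symp m s t + symp m r t) + c t * (symp m s t - symp m r s)"
    using s t st by (intro leibniz_off_kernel)
  moreover have "symp m (vadd s r) t * c (vadd (vadd s r) t) =
      c (vadd s r) * (symp m (vadd s r) t + symp m r t) +
      c t * (symp m (vadd s r) t - symp m r (vadd s r))"
    using s t st
    by (intro leibniz_off_kernel) (simp_all add: vadd_in_Zvec r_in_Zvec symp_vadd_right)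
  moreover have "vadd (vadd s r) t = vadd (vadd s t) r"
    by (metis vadd_assoc vadd_commute)
  ultimately have "symp m r t * c (vadd s t) = symp m r t * (c s + c t)"
    using coeff_shift s st vadd_in_Zvec[OF s(1) t(1)]
    by (simp add: symp_vadd_left symp_antisym[of m r s] algebra_simps)
  then show ?thesis
    using t(2) by simp
qed

lemma coeff_cross:
  assumes s: "s \<in> Zvec (2*m)" "symp m r s \<noteq> (0::'k)"
    and t: "t \<in> Zvec (2*m)" "symp m r t \<noteq> (0::'k)"
    and st: "symp m r (vadd s t) \<noteq> (0::'k)"
  shows "symp m r t * c s = symp m r s * c t"
proof -
  have "symp m s t * c (vadd s t) = c s * (symp m s t + symp m r t) + c t * (symp m s t - symp m r s)"
    using s t st by (intro leibniz_off_kernel)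
  then show ?thesis
    using coeff_add[OF s t st] by (simp add: algebra_simps)
qed

definition slope :: 'k where
  "slope = c rbar / symp m r rbar"

lemma coeff_off_kernel:
  assumes s: "s \<in> Zvec (2*m)" "symp m r s \<noteq> (0::'k)"
  shows "c s = slope * symp m r s"
proof -
  have rbar: "rbar \<in> Zvec (2*m)" "symp m r rbar \<noteq> (0::'k)"
    by (simp_all add: Jmat_in_Zvec symp_r_rbar_nonzero)
  have "symp m r rbar * c s = symp m r s * c rbar"
  proof (cases "symp m r (vadd s rbar) = (0::'k)")
    case False
    then show ?thesis using coeff_cross[OF s rbar] by simp
  next
    case True
    \<comment> \<open>then s + 2 rbar lies off the kernel, and c is additive along rbar\<close>
    have rbar2: "vadd rbar rbar \<in> Zvec (2*m)" "symp m r (vadd rbar rbar) \<noteq> (0::'k)"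
      using rbar by (simp_all add: vadd_in_Zvec symp_vadd_right)
    from True have "symp m r s = - (symp m r rbar :: 'k)"
      by (simp add: symp_vadd_right eq_neg_iff_add_eq_0)
    then have "symp m r (vadd s (vadd rbar rbar)) \<noteq> (0::'k)"
      using rbar by (simp add: symp_vadd_right)
    then have "symp m r (vadd rbar rbar) * c s = symp m r s * c (vadd rbar rbar)"
      using coeff_cross[OF s rbar2] by simp
    then show ?thesis
      using coeff_add[OF rbar rbar] rbar2 by (simp add: symp_vadd_right algebra_simps)
  qed
  then show ?thesis
    using rbar by (simp add: slope_def field_simps)
qed

lemma coeff_on_kernel:
  assumes s: "s \<in> Zvec (2*m)" "symp m r s = (0::'k)" and sr: "vadd s r \<noteq> vzero"
  shows "c s = 0"
proof -
  obtain t where t: "t \<in> Zvec (2*m)" "symp m r t \<noteq> (0::'k)" "symp m (vadd s r) t \<noteq> (0::'k)"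
    using exists_symp_both_nonzero[OF r_in_Zvec r_nonzero vadd_in_Zvec[OF s(1) r_in_Zvec] sr]
    by metis
  have "symp m s t * c (vadd s t) = c s * (symp m s t + symp m r t) + c t * (symp m s t - symp m r s)"
    using s t by (intro leibniz_off_kernel) (simp_all add: symp_vadd_right)
  moreover have "c (vadd s t) = c t"
    using s t coeff_off_kernel[of t] coeff_off_kernel[of "vadd s t"]
    by (simp add: vadd_in_Zvec symp_vadd_right)
  ultimately have "c s * symp m (vadd s r) t = 0"
    using s by (simp add: symp_vadd_left algebra_simps)
  then show ?thesis
    using t(3) by simp
qed

lemma coeff_eq:
  assumes "s \<in> Zvec (2*m)" "vadd s r \<noteq> vzero"
  shows "c s = slope * symp m r s"
  using assms coeff_off_kernel coeff_on_kernel by (cases "symp m r s = (0::'k)") auto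

end

lemma hb_vzero: "hb vzero = (\<lambda>_. 0)"
  by (simp add: hb_def fun_eq_iff)

lemma smul_one: "smul 1 x = x"
  by (simp add: smul_def)

lemma supp_smul_hb: "supp (smul a (hb s)) \<subseteq> {s}"
  by (auto simp: supp_def smul_def hb_def)

lemma Hcar_finite_supp: "x \<in> Hcar m \<Longrightarrow> finite (supp x)"
  by (simp add: Hcar_def supp_def)

lemma Hcar_zero: "(\<lambda>_. 0) \<in> Hcar m"
  by (simp add: Hcar_def)

lemma Hcar_hb: "s \<in> Zvec (2*m) \<Longrightarrow> hb s \<in> Hcar m"
  by (simp add: Hcar_def hb_def)

lemma Hcar_smul: "x \<in> Hcar m \<Longrightarrow> smul a x \<in> Hcar m"
  unfolding Hcar_def smul_def by (auto elim: rev_finite_subset)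

lemma Hcar_induct [consumes 1, case_names zero add_term]:
  fixes P :: "((nat \<Rightarrow> int) \<Rightarrow> 'k::field) \<Rightarrow> bool"
  assumes "x \<in> Hcar m"
    and zero: "P (\<lambda>_. 0)"
    and add_term: "\<And>x s a. x \<in> Hcar m \<Longrightarrow> s \<in> Zvec (2*m) \<Longrightarrow> P x \<Longrightarrow> P (hadd (smul a (hb s)) x)"
  shows "P x"
proof -
  have "\<forall>x. x \<in> Hcar m \<longrightarrow> supp x = F \<longrightarrow> P x" if "finite F" for F
    using that
  proof (induction F rule: finite_induct)
    case empty
    then show ?case
      using zero by (auto simp: supp_def)
  next
    case (insert s F)
    show ?case
    proof (intro allI impI)
      fix x :: "(nat \<Rightarrow> int) \<Rightarrow> 'k"
      assume x: "x \<in> Hcar m" "supp x = insert s F"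
      define x' where "x' = x(s := 0)"
      have s: "s \<in> Zvec (2*m)" "s \<noteq> vzero"
        using x by (auto simp: supp_def Hcar_def)
      have x': "x' \<in> Hcar m" "supp x' = F"
        using x insert.hyps unfolding Hcar_def supp_def x'_def by (auto elim: rev_finite_subset)
      have "x = hadd (smul (x s) (hb s)) x'"
        using s by (auto simp: hadd_def smul_def hb_def x'_def)
      then show "P x"
        using add_term[OF x'(1) s(1)] insert.IH x' by metis
    qed
  qed
  then show ?thesis
    using assms(1) Hcar_finite_supp by blast
qed

lemma hbr_eq_sum_supersets:
  assumes "finite A" "supp x \<subseteq> A" "finite B" "supp y \<subseteq> B"
  shows "hbr m x y = (\<lambda>t. if t = vzero then 0 else
      (\<Sum>r\<in>A. \<Sum>s\<in>B. if vadd r s = t then x r * y s * symp m r s else 0))"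
proof -
  let ?f = "\<lambda>t r s. if vadd r s = t then x r * y s * symp m r s else 0"
  have inner: "(\<Sum>s\<in>supp y. ?f t r s) = (\<Sum>s\<in>B. ?f t r s)" for r t
    by (rule sum.mono_neutral_left) (use assms in \<open>auto simp: supp_def\<close>)
  have outer: "(\<Sum>r\<in>supp x. \<Sum>s\<in>B. ?f t r s) = (\<Sum>r\<in>A. \<Sum>s\<in>B. ?f t r s)" for t
    by (intro sum.mono_neutral_left ballI sum.neutral) (use assms in \<open>auto simp: supp_def\<close>)
  show ?thesis
    unfolding hbr_def symp_def[symmetric] inner outer ..
qed

lemma hbr_smul_hb_smul_hb:
  "hbr m (smul a (hb s)) (smul b (hb t)) = smul (a * b * symp m s t) (hb (vadd s t))"
  by (subst hbr_eq_sum_supersets[OF _ supp_smul_hb _ supp_smul_hb])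
    (auto simp: smul_def hb_def intro!: ext)

lemma hbr_hb_hb: "hbr m (hb s) (hb t) = smul (symp m s t) (hb (vadd s t))"
  using hbr_smul_hb_smul_hb[of m 1 s 1 t] by (simp add: smul_one)

lemma hbr_zero_right: "hbr m z (\<lambda>_. 0) = (\<lambda>_. 0)"
  by (simp add: hbr_def supp_def fun_eq_iff)

lemma hbr_hadd_right:
  assumes "finite (supp z)" "finite (supp x)" "finite (supp y)"
  shows "hbr m z (hadd x y) = hadd (hbr m z x) (hbr m z y)"
proof -
  let ?B = "supp x \<union> supp y"
  have "supp (hadd x y) \<subseteq> ?B"
    by (auto simp: supp_def hadd_def)
  then show ?thesis
    using assms
    by (simp add: hbr_eq_sum_supersets[of "supp z" _ ?B] hadd_def sum.distrib[symmetric]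
        algebra_simps if_distrib fun_eq_iff cong: if_cong)
qed

lemma hbr_smul_right:
  assumes "finite (supp z)" "finite (supp x)"
  shows "hbr m z (smul a x) = smul a (hbr m z x)"
proof -
  have "supp (smul a x) \<subseteq> supp x"
    by (auto simp: supp_def smul_def)
  then show ?thesis
    using assms
    by (simp add: hbr_eq_sum_supersets[of "supp z" _ "supp x"] smul_def sum_distrib_left
        algebra_simps if_distrib fun_eq_iff cong: if_cong)
qed

lemma derivation_hadd:
  "is_derivation m D \<Longrightarrow> x \<in> Hcar m \<Longrightarrow> y \<in> Hcar m \<Longrightarrow> D (hadd x y) = hadd (D x) (D y)"
  by (simp add: is_derivation_def)

lemma derivation_smul:
  "is_derivation m D \<Longrightarrow> x \<in> Hcar m \<Longrightarrow> D (smul a x) = smul a (D x)"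
  by (simp add: is_derivation_def)

lemma derivation_hbr:
  "is_derivation m D \<Longrightarrow> x \<in> Hcar m \<Longrightarrow> y \<in> Hcar m \<Longrightarrow>
    D (hbr m x y) = hadd (hbr m (D x) y) (hbr m x (D y))"
  by (simp add: is_derivation_def)

lemma derivation_zero:
  assumes "is_derivation m D"
  shows "D (\<lambda>_. 0) = (\<lambda>_. 0)"
  using derivation_smul[OF assms Hcar_zero, of 0] by (simp add: smul_def)

lemma derivation_eqI_on_basis:
  assumes D: "is_derivation m D" and w: "finite (supp w)"
    and basis: "\<And>s. s \<in> Zvec (2*m) \<Longrightarrow> D (hb s) = hbr m w (hb s)"
    and x: "x \<in> Hcar m"
  shows "D x = hbr m w x"
  using x
proof (induction rule: Hcar_induct)
  case zero
  show ?case
    using derivation_zero[OF D] by (simp add: hbr_zero_right)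
next
  case (add_term x s a)
  have hb: "hb s \<in> Hcar m" "finite (supp (hb s))"
    using add_term.hyps(2) Hcar_hb Hcar_finite_supp by blast+
  have "D (hadd (smul a (hb s)) x) = hadd (smul a (D (hb s))) (D x)"
    by (simp add: derivation_hadd[OF D Hcar_smul[OF hb(1)] add_term.hyps(1)]
        derivation_smul[OF D hb(1)])
  also have "\<dots> = hadd (hbr m w (smul a (hb s))) (hbr m w x)"
    using basis add_term by (simp add: hbr_smul_right[OF w hb(2)])
  also have "\<dots> = hbr m w (hadd (smul a (hb s)) x)"
    using hbr_hadd_right[OF w Hcar_finite_supp[OF Hcar_smul[OF hb(1)]]
        Hcar_finite_supp[OF add_term.hyps(1)]] by simp
  finally show ?case .
qed

lemma derivation_coeffs_leibniz:
  assumes D: "is_derivation m D"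
    and coeff: "\<And>s. s \<in> Zvec (2*m) \<Longrightarrow> D (hb s) = smul (c s) (hb (vadd s r))"
    and s: "s \<in> Zvec (2*m)" and t: "t \<in> Zvec (2*m)" and str: "vadd (vadd s t) r \<noteq> vzero"
  shows "symp m s t * c (vadd s t) = c s * symp m (vadd s r) t + c t * symp m s (vadd t r)"
proof -
  have st: "vadd s t \<in> Zvec (2*m)"
    using s t by (rule vadd_in_Zvec)
  have "D (hbr m (hb s) (hb t)) = hadd (hbr m (D (hb s)) (hb t)) (hbr m (hb s) (D (hb t)))"
    using derivation_hbr[OF D Hcar_hb[OF s] Hcar_hb[OF t]] .
  moreover have "D (hbr m (hb s) (hb t)) = smul (symp m s t * c (vadd s t)) (hb (vadd (vadd s t) r))"
    by (simp add: hbr_hb_hb derivation_smul[OF D Hcar_hb[OF st]] coeff[OF st])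
      (simp add: smul_def mult.assoc)
  moreover have "hbr m (D (hb s)) (hb t) = smul (c s * symp m (vadd s r) t) (hb (vadd (vadd s t) r))"
    using hbr_smul_hb_smul_hb[of m "c s" "vadd s r" 1 t]
    by (simp add: coeff[OF s] smul_one vadd_assoc vadd_commute[of r t])
  moreover have "hbr m (hb s) (D (hb t)) = smul (c t * symp m s (vadd t r)) (hb (vadd (vadd s t) r))"
    using hbr_smul_hb_smul_hb[of m 1 s "c t" "vadd t r"]
    by (simp add: coeff[OF t] smul_one vadd_assoc)
  ultimately have "smul (symp m s t * c (vadd s t)) (hb (vadd (vadd s t) r)) =
      hadd (smul (c s * symp m (vadd s r) t) (hb (vadd (vadd s t) r)))
        (smul (c t * symp m s (vadd t r)) (hb (vadd (vadd s t) r)))"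
    by simp
  from fun_cong[OF this, of "vadd (vadd s t) r"] show ?thesis
    using str by (simp add: smul_def hadd_def hb_def)
qed

theorem lemma4p3:
  fixes m :: nat and r :: "nat \<Rightarrow> int"
    and D :: "((nat \<Rightarrow> int) \<Rightarrow> 'k::field_char_0) \<Rightarrow> ((nat \<Rightarrow> int) \<Rightarrow> 'k)"
  assumes "m \<ge> 1"
    and "alg_closed TYPE('k)"
    and "r \<in> Zvec (2*m)" and "r \<noteq> vzero"
    and "is_derivation m D"
    and "\<forall>s\<in>Zvec (2*m). \<exists>c. D (hb s) = smul c (hb (vadd s r))"
  shows "\<exists>c::'k. \<forall>x\<in>Hcar m. D x = hbr m (smul c (hb r)) x"
proof -
  \<comment> \<open>m \<ge> 1 already follows from r \<noteq> 0.\<close>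
  obtain c where coeff: "\<And>s. s \<in> Zvec (2*m) \<Longrightarrow> D (hb s) = smul (c s) (hb (vadd s r))"
    using assms(6) by metis
  interpret derivation_coeffs m r c
    using assms(3,4) derivation_coeffs_leibniz[OF assms(5) coeff] by unfold_locales
  have "D (hb s) = hbr m (smul slope (hb r)) (hb s)" if s: "s \<in> Zvec (2*m)" for s
    using hbr_smul_hb_smul_hb[of m slope r 1 s] coeff_eq[OF s]
    by (cases "vadd s r = vzero") (simp_all add: coeff[OF s] smul_one hb_vzero smul_def vadd_commute)
  then show ?thesis
    using derivation_eqI_on_basis[OF assms(5) finite_subset[OF supp_smul_hb]] by blast
qed

end
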